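(* Let $\mathcal{M}$ be any submonoid of $\mathcal{R}$ that contains $f_p$ for infinitely many primes $p$. Then $\mathcal{M}$ is not finitely generated.
   Context: $\mathcal{R}$ is the group of rational homeomorphisms of $\{0,1\}^\omega$: those $f$ for which there is a finite asynchronous binary transducer $(S,s_0,t,o)$ ($S$ finite, $t\colon S\times\{0,1\}\to S$, $o\colon S\times\{0,1\}\to\{0,1\}^*$) with $f(\psi)=o(s_0,\psi)$, where for $\sigma_1\sigma_2\cdots$ one sets $s_1=s_0$, $s_{n+1}=t(s_n,\sigma_n)$ and $o(s_0,\sigma_1\sigma_2\cdots)=o(s_1,\sigma_1)o(s_2,\sigma_2)\cdots$. For a prime $p$, $f_p\in\mathcal{R}$ is the homeomorphism that switches every $p$-th digit of a binary sequence (the digits in positions $p,2p,3p,\ldots$) and leaves the remaining digits unchanged. *)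

theory Defs
  imports "HOL-Analysis.Analysis" "HOL-Computational_Algebra.Primes"
begin

text \<open>Binary sequences \<open>{0,1}^\<omega>\<close> are modelled as \<open>nat \<Rightarrow> bool\<close> (digit \<open>i+1\<close> of the
  sequence is the value at index \<open>i\<close>), with the product topology of the discrete
  space bool (library instance).\<close>

fun trans_state :: "(nat \<Rightarrow> bool \<Rightarrow> nat) \<Rightarrow> nat \<Rightarrow> (nat \<Rightarrow> bool) \<Rightarrow> nat \<Rightarrow> nat" where
  "trans_state t s0 \<psi> 0 = s0"
| "trans_state t s0 \<psi> (Suc n) = t (trans_state t s0 \<psi> n) (\<psi> n)"

definition trans_out_prefix ::
  "(nat \<Rightarrow> bool \<Rightarrow> nat) \<Rightarrow> (nat \<Rightarrow> bool \<Rightarrow> bool list) \<Rightarrow> nat \<Rightarrow> (nat \<Rightarrow> bool) \<Rightarrow> nat \<Rightarrow> bool list" where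
  "trans_out_prefix t out s0 \<psi> n = concat (map (\<lambda>i. out (trans_state t s0 \<psi> i) (\<psi> i)) [0..<n])"

text \<open>f(\<psi>) equals the infinite word o(s0,\<psi>): the concatenated outputs are infinite
  and every finite partial concatenation is a prefix of f(\<psi>).\<close>
definition transducer_computes ::
  "nat set \<Rightarrow> nat \<Rightarrow> (nat \<Rightarrow> bool \<Rightarrow> nat) \<Rightarrow> (nat \<Rightarrow> bool \<Rightarrow> bool list) \<Rightarrow> ((nat \<Rightarrow> bool) \<Rightarrow> (nat \<Rightarrow> bool)) \<Rightarrow> bool" where
  "transducer_computes S s0 t out f \<longleftrightarrow>
     finite S \<and> s0 \<in> S \<and> (\<forall>s\<in>S. \<forall>b. t s b \<in> S) \<and>
     (\<forall>\<psi>. (\<forall>k. \<exists>n. k \<le> length (trans_out_prefix t out s0 \<psi> n)) \<and>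
          (\<forall>n. \<forall>i < length (trans_out_prefix t out s0 \<psi> n). f \<psi> i = trans_out_prefix t out s0 \<psi> n ! i))"

definition rational_homeos :: "((nat \<Rightarrow> bool) \<Rightarrow> (nat \<Rightarrow> bool)) set" where
  "rational_homeos = {f. (\<exists>g. homeomorphism UNIV UNIV f g) \<and>
      (\<exists>S s0 t out. transducer_computes S s0 t out f)}"

text \<open>f_p switches the digits in positions p, 2p, 3p, ... (1-based), i.e. indices i with p dvd i+1.\<close>
definition switch_every :: "nat \<Rightarrow> (nat \<Rightarrow> bool) \<Rightarrow> (nat \<Rightarrow> bool)" where
  "switch_every p \<psi> = (\<lambda>i. if p dvd (i + 1) then \<not> \<psi> i else \<psi> i)"

definition is_submonoid_of_R :: "((nat \<Rightarrow> bool) \<Rightarrow> (nat \<Rightarrow> bool)) set \<Rightarrow> bool" where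
  "is_submonoid_of_R M \<longleftrightarrow> M \<subseteq> rational_homeos \<and> id \<in> M \<and> (\<forall>f\<in>M. \<forall>g\<in>M. f \<circ> g \<in> M)"

inductive_set monoid_generated :: "('a \<Rightarrow> 'a) set \<Rightarrow> ('a \<Rightarrow> 'a) set" for G where
  gen_id: "id \<in> monoid_generated G"
| gen_comp: "g \<in> G \<Longrightarrow> h \<in> monoid_generated G \<Longrightarrow> g \<circ> h \<in> monoid_generated G"

definition finitely_generated_monoid :: "('a \<Rightarrow> 'a) set \<Rightarrow> bool" where
  "finitely_generated_monoid M \<longleftrightarrow> (\<exists>G. finite G \<and> G \<subseteq> M \<and> monoid_generated G = M)"

end

(*
  A transducer with N states returns to the same state within N repetitions of any input
  block v, so its function f can be "pumped": after some prefix U v^m, inserting a further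
  block v^a (0 < a <= N) into the input inserts a fixed word into the output and leaves the
  rest of the output unchanged. Weakening a <= N to "every prime factor of a is at most N",
  this property survives composition: pump g, then pump f along the block g inserts. Hence
  all elements of a finitely generated monoid of rational homeomorphisms are pumpable with
  one bound N. But f_p only pumps blocks whose length is a multiple of p, since inserting
  input digits must not shift the phase of the switched positions; so f_p is not pumpable
  for primes p > N.
*)
theory Submission
  imports Defs "HOL-Library.Omega_Words_Fun"
begin

definition list_pow :: "'a list \<Rightarrow> nat \<Rightarrow> 'a list" where
  "list_pow v n = concat (replicate n v)"

lemma list_pow_0 [simp]: "list_pow v 0 = []"
  by (simp add: list_pow_def)

lemma list_pow_Suc: "list_pow v (Suc n) = v @ list_pow v n"
  by (simp add: list_pow_def)

lemma list_pow_add: "list_pow v (m + n) = list_pow v m @ list_pow v n"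
  by (simp add: list_pow_def replicate_add)

lemma list_pow_Suc_right: "list_pow v (Suc n) = list_pow v n @ v"
  using list_pow_add[of v n 1] by (simp add: list_pow_def)

lemma list_pow_mult: "list_pow (list_pow v a) n = list_pow v (a * n)"
  by (induction n) (simp_all add: list_pow_Suc list_pow_add)

lemma length_list_pow [simp]: "length (list_pow v n) = n * length v"
  by (induction n) (simp_all add: list_pow_Suc)

definition smooth :: "nat \<Rightarrow> nat \<Rightarrow> bool" where
  "smooth N a \<longleftrightarrow> (\<forall>q. prime q \<longrightarrow> q dvd a \<longrightarrow> q \<le> N)"

lemma smooth_mono: "smooth N a \<Longrightarrow> N \<le> N' \<Longrightarrow> smooth N' a"
  by (auto simp: smooth_def)

lemma smooth_mult: "smooth N a \<Longrightarrow> smooth N b \<Longrightarrow> smooth N (a * b)"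
  unfolding smooth_def by (meson prime_dvd_mult_iff)

lemma smooth_if_le: "0 < a \<Longrightarrow> a \<le> N \<Longrightarrow> smooth N a"
  unfolding smooth_def by (meson dvd_imp_le le_trans)

definition pumps :: "('a word \<Rightarrow> 'b word) \<Rightarrow> 'a list \<Rightarrow> 'a list \<Rightarrow> 'b list \<Rightarrow> 'b list \<Rightarrow> bool" where
  "pumps f X P Y Q \<longleftrightarrow> (\<forall>\<psi>. \<exists>T. f (X \<frown> \<psi>) = Y \<frown> T \<and> f ((X @ P) \<frown> \<psi>) = (Y @ Q) \<frown> T)"

lemma pumpsE:
  assumes "pumps f X P Y Q"
  obtains T where "f (X \<frown> \<psi>) = Y \<frown> T" "f ((X @ P) \<frown> \<psi>) = (Y @ Q) \<frown> T"
  using assms unfolding pumps_def by blast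

lemma pumps_comp: "pumps g X P Y Q \<Longrightarrow> pumps f Y Q Z R \<Longrightarrow> pumps (f \<circ> g) X P Z R"
  unfolding pumps_def by (metis comp_apply)

lemma pumps_append:
  assumes "pumps f X P Y Q" and "pumps f (X @ P) P' (Y @ Q) Q'"
  shows "pumps f X (P @ P') Y (Q @ Q')"
  unfolding pumps_def
proof
  fix \<psi>
  obtain T where T: "f (X \<frown> \<psi>) = Y \<frown> T" "f ((X @ P) \<frown> \<psi>) = (Y @ Q) \<frown> T"
    using assms(1) by (rule pumpsE)
  obtain T' where T': "f ((X @ P) \<frown> \<psi>) = (Y @ Q) \<frown> T'" "f ((X @ P @ P') \<frown> \<psi>) = (Y @ Q @ Q') \<frown> T'"
    using assms(2)[unfolded pumps_def, rule_format, of \<psi>] by auto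
  from T(2) T'(1) have "T' = T" by simp
  with T T' show "\<exists>T. f (X \<frown> \<psi>) = Y \<frown> T \<and> f ((X @ P @ P') \<frown> \<psi>) = (Y @ Q @ Q') \<frown> T"
    by blast
qed

lemma pumps_shift:
  assumes "pumps f X P Y Q"
  shows "pumps f (X @ P) P (Y @ Q) Q"
  unfolding pumps_def
proof
  fix \<psi>
  obtain T where T: "f (X \<frown> \<psi>) = Y \<frown> T" "f ((X @ P) \<frown> \<psi>) = (Y @ Q) \<frown> T"
    using assms by (rule pumpsE)
  obtain T' where T': "f ((X @ P) \<frown> \<psi>) = Y \<frown> T'" "f ((X @ P @ P) \<frown> \<psi>) = (Y @ Q) \<frown> T'"
    using assms[unfolded pumps_def, rule_format, of "P \<frown> \<psi>"] by auto
  from T(2) T'(1) have "T' = Q \<frown> T" by (metis conc_conc same_concat_eq)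
  with T T' show "\<exists>T. f ((X @ P) \<frown> \<psi>) = (Y @ Q) \<frown> T \<and> f (((X @ P) @ P) \<frown> \<psi>) = ((Y @ Q) @ Q) \<frown> T"
    by auto
qed

lemma pumps_shift_list_pow:
  "pumps f X P Y Q \<Longrightarrow> pumps f (X @ list_pow P j) P (Y @ list_pow Q j) Q"
proof (induction j arbitrary: X Y)
  case 0
  then show ?case by simp
next
  case (Suc j)
  then show ?case using pumps_shift by (fastforce simp: list_pow_Suc)
qed

lemma pumps_list_pow:
  assumes "pumps f X P Y Q"
  shows "pumps f (X @ list_pow P j) (list_pow P k) (Y @ list_pow Q j) (list_pow Q k)"
proof (induction k arbitrary: j)
  case 0
  show ?case using pumps_shift_list_pow[OF assms, of j] unfolding pumps_def by auto
next
  case (Suc k)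
  have "pumps f (X @ list_pow P j) P (Y @ list_pow Q j) Q"
    using assms by (rule pumps_shift_list_pow)
  moreover have "pumps f ((X @ list_pow P j) @ P) (list_pow P k) ((Y @ list_pow Q j) @ Q) (list_pow Q k)"
    using Suc.IH[of "Suc j"] by (simp add: list_pow_Suc_right)
  ultimately have "pumps f (X @ list_pow P j) (P @ list_pow P k) (Y @ list_pow Q j) (Q @ list_pow Q k)"
    by (rule pumps_append)
  then show ?case by (simp add: list_pow_Suc)
qed

definition pumpable :: "nat \<Rightarrow> ('a word \<Rightarrow> 'b word) \<Rightarrow> bool" where
  "pumpable N f \<longleftrightarrow>
     (\<forall>U v. \<exists>m a Y Q. smooth N a \<and> pumps f (U @ list_pow v m) (list_pow v a) Y Q)"

lemma pumpable_id: "pumpable N id"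
  unfolding pumpable_def
proof (intro allI)
  fix U v :: "'a list"
  have "smooth N 1" by (simp add: smooth_def)
  moreover have "pumps id (U @ list_pow v 0) (list_pow v 1) U v"
    by (simp add: pumps_def list_pow_def)
  ultimately show "\<exists>m a Y Q. smooth N a \<and> pumps id (U @ list_pow v m) (list_pow v a) Y Q"
    by blast
qed

lemma pumpable_mono: "pumpable N f \<Longrightarrow> N \<le> N' \<Longrightarrow> pumpable N' f"
  unfolding pumpable_def by (meson smooth_mono)

lemma pumpable_comp:
  assumes f: "pumpable N f" and g: "pumpable N g"
  shows "pumpable N (f \<circ> g)"
  unfolding pumpable_def
proof (intro allI)
  fix U v
  obtain m a Y Q where a: "smooth N a" and g_pumps: "pumps g (U @ list_pow v m) (list_pow v a) Y Q"
    using g unfolding pumpable_def by blast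
  obtain m' c Z R where c: "smooth N c" and f_pumps: "pumps f (Y @ list_pow Q m') (list_pow Q c) Z R"
    using f unfolding pumpable_def by blast
  have "pumps g ((U @ list_pow v m) @ list_pow (list_pow v a) m') (list_pow (list_pow v a) c)
      (Y @ list_pow Q m') (list_pow Q c)"
    using g_pumps by (rule pumps_list_pow)
  then have "pumps g (U @ list_pow v (m + a * m')) (list_pow v (a * c)) (Y @ list_pow Q m') (list_pow Q c)"
    by (simp add: list_pow_mult list_pow_add)
  then have "pumps (f \<circ> g) (U @ list_pow v (m + a * m')) (list_pow v (a * c)) Z R"
    using f_pumps by (rule pumps_comp)
  with a c show "\<exists>m a Z R. smooth N a \<and> pumps (f \<circ> g) (U @ list_pow v m) (list_pow v a) Z R"
    using smooth_mult by blast
qed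

lemma monoid_generated_pumpable:
  assumes "finite G" and "\<forall>g\<in>G. \<exists>N. pumpable N g"
  obtains N where "\<forall>h \<in> monoid_generated G. pumpable N h"
proof -
  obtain Ng where Ng: "\<forall>g\<in>G. pumpable (Ng g) g"
    using assms(2) by metis
  define N where "N = Max (insert 0 (Ng ` G))"
  have generators: "pumpable N g" if "g \<in> G" for g
    using Ng that \<open>finite G\<close> by (auto simp: N_def intro: pumpable_mono)
  have "pumpable N h" if "h \<in> monoid_generated G" for h
    using that
  proof induction
    case gen_id
    show ?case by (rule pumpable_id)
  next
    case (gen_comp g h)
    then show ?case by (metis generators pumpable_comp)
  qed
  then show thesis using that by blast
qed

lemma switch_every_apply: "switch_every p \<phi> j \<longleftrightarrow> (p dvd j + 1) \<noteq> \<phi> j"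
  by (simp add: switch_every_def)

lemma pumps_switch_every:
  assumes "0 < p" and pumps: "pumps (switch_every p) X P Y Q"
  shows "length Q = length P \<and> p dvd length P"
proof -
  define L B n where "L = length Y" and "B = length Q" and "n = length X + length P"
  have key: "((p dvd L + B + i + 1) \<noteq> ((X @ P) \<frown> \<psi>) (L + B + i)) \<longleftrightarrow>
      ((p dvd L + i + 1) \<noteq> (X \<frown> \<psi>) (L + i))" for i \<psi>
  proof -
    obtain T where "switch_every p (X \<frown> \<psi>) = Y \<frown> T" "switch_every p ((X @ P) \<frown> \<psi>) = (Y @ Q) \<frown> T"
      using pumps by (rule pumpsE)
    then have "switch_every p ((X @ P) \<frown> \<psi>) (L + B + i) = T i" "switch_every p (X \<frown> \<psi>) (L + i) = T i"
      by (simp_all add: L_def B_def)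
    then show ?thesis by (simp add: switch_every_apply)
  qed
  have dvd_shift: "p dvd L + B + i + 1 \<longleftrightarrow> p dvd L + i + 1" if "n \<le> i" for i
    using key[of i "\<lambda>_. False"] that by (simp add: n_def)
  have input_shift: "((X @ P) \<frown> \<psi>) (L + B + n) = (X \<frown> \<psi>) (L + n)" for \<psi>
    using key[of n \<psi>] dvd_shift[of n] by auto
  have "length Q = length P"
    using input_shift[of "\<lambda>j. j = L + length P"] by (simp add: B_def n_def)
  moreover have "p dvd length Q"
  proof -
    define i where "i = p * (L + n + 1) - (L + 1)"
    have "L + n + 1 \<le> p * (L + n + 1)"
      using mult_le_mono1[of 1 p "L + n + 1"] \<open>0 < p\<close> by simp
    then have "n \<le> i" and i: "L + i + 1 = p * (L + n + 1)" by (simp_all add: i_def)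
    have i_dvd: "p dvd L + i + 1" unfolding i by simp
    with dvd_shift[OF \<open>n \<le> i\<close>] have "p dvd (L + i + 1) + B" by (simp add: ac_simps)
    with i_dvd have "p dvd B" using dvd_add_right_iff by blast
    then show ?thesis by (simp add: B_def)
  qed
  ultimately show ?thesis by simp
qed

lemma not_pumpable_switch_every:
  assumes "prime p" and "N < p"
  shows "\<not> pumpable N (switch_every p)"
proof
  assume "pumpable N (switch_every p)"
  then obtain m a Y Q where a: "smooth N a"
    and pumps: "pumps (switch_every p) ([] @ list_pow [True] m) (list_pow [True] a) Y Q"
    unfolding pumpable_def by blast
  have "p dvd length (list_pow [True] a)"
    using pumps_switch_every[OF prime_gt_0_nat[OF \<open>prime p\<close>] pumps] by blast
  then have "p dvd a" by simp
  then have "p \<le> N" using a \<open>prime p\<close> unfolding smooth_def by blast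
  with \<open>N < p\<close> show False by simp
qed

definition run_state :: "('s \<Rightarrow> 'a \<Rightarrow> 's) \<Rightarrow> 's \<Rightarrow> 'a list \<Rightarrow> 's" where
  "run_state t s X = fold (\<lambda>b s. t s b) X s"

fun run_output :: "('s \<Rightarrow> 'a \<Rightarrow> 's) \<Rightarrow> ('s \<Rightarrow> 'a \<Rightarrow> 'b list) \<Rightarrow> 's \<Rightarrow> 'a list \<Rightarrow> 'b list" where
  "run_output t out s [] = []"
| "run_output t out s (b # X) = out s b @ run_output t out (t s b) X"

lemma run_state_Nil [simp]: "run_state t s [] = s"
  by (simp add: run_state_def)

lemma run_state_Cons [simp]: "run_state t s (b # X) = run_state t (t s b) X"
  by (simp add: run_state_def)

lemma run_state_append [simp]: "run_state t s (X @ Y) = run_state t (run_state t s X) Y"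
  by (simp add: run_state_def)

lemma run_output_append:
  "run_output t out s (X @ Y) = run_output t out s X @ run_output t out (run_state t s X) Y"
  by (induction X arbitrary: s) auto

lemma run_state_closed: "s \<in> S \<Longrightarrow> \<forall>s\<in>S. \<forall>b. t s b \<in> S \<Longrightarrow> run_state t s X \<in> S"
  by (induction X arbitrary: s) auto

lemma trans_out_prefix_Suc:
  "trans_out_prefix t out s \<phi> (Suc n) = trans_out_prefix t out s \<phi> n @ out (trans_state t s \<phi> n) (\<phi> n)"
  by (simp add: trans_out_prefix_def)

lemma trans_state_build: "trans_state t s (b ## \<phi>) (Suc n) = trans_state t (t s b) \<phi> n"
  by (induction n) auto

lemma trans_out_prefix_build:
  "trans_out_prefix t out s (b ## \<phi>) (Suc n) = out s b @ trans_out_prefix t out (t s b) \<phi> n"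
proof (induction n)
  case 0
  then show ?case by (simp add: trans_out_prefix_def)
next
  case (Suc n)
  then show ?case
    by (simp add: trans_out_prefix_Suc[of _ _ _ _ "Suc n"] trans_out_prefix_Suc[of _ _ _ _ n]
        trans_state_build del: trans_state.simps(2))
qed

lemma trans_state_conc:
  "trans_state t s (X \<frown> \<psi>) (length X + k) = trans_state t (run_state t s X) \<psi> k"
  by (induction X arbitrary: s) (simp_all add: trans_state_build del: trans_state.simps(2))

lemma trans_out_prefix_conc:
  "trans_out_prefix t out s (X \<frown> \<psi>) (length X + k) =
     run_output t out s X @ trans_out_prefix t out (run_state t s X) \<psi> k"
  by (induction X arbitrary: s) (simp_all add: trans_out_prefix_build del: trans_state.simps(2))

lemma length_trans_out_prefix_mono:
  "n \<le> n' \<Longrightarrow> length (trans_out_prefix t out s \<psi> n) \<le> length (trans_out_prefix t out s \<psi> n')"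
  by (induction rule: dec_induct) (auto simp: trans_out_prefix_def)

context
  fixes S s0 t out and f :: "bool word \<Rightarrow> bool word"
  assumes computes: "transducer_computes S s0 t out f"
begin

lemma computes_conc_prefix:
  assumes "j < length (run_output t out s0 X)"
  shows "f (X \<frown> \<psi>) j = run_output t out s0 X ! j"
proof -
  have "trans_out_prefix t out s0 (X \<frown> \<psi>) (length X) = run_output t out s0 X"
    using trans_out_prefix_conc[of t out s0 X \<psi> 0] by (simp add: trans_out_prefix_def)
  then show ?thesis
    using computes assms unfolding transducer_computes_def by metis
qed

lemma computes_conc_suffix:
  assumes "i < length (trans_out_prefix t out (run_state t s0 X) \<psi> k)"
  shows "f (X \<frown> \<psi>) (length (run_output t out s0 X) + i) =
    trans_out_prefix t out (run_state t s0 X) \<psi> k ! i"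
  using computes assms trans_out_prefix_conc[of t out s0 X \<psi> k]
  unfolding transducer_computes_def by (metis length_append nat_add_left_cancel_less nth_append_length_plus)

lemma computes_output_unbounded: "\<exists>k. i < length (trans_out_prefix t out (run_state t s0 X) \<psi> k)"
proof -
  obtain n where "length (run_output t out s0 X) + Suc i \<le> length (trans_out_prefix t out s0 (X \<frown> \<psi>) n)"
    using computes unfolding transducer_computes_def by blast
  also have "\<dots> \<le> length (trans_out_prefix t out s0 (X \<frown> \<psi>) (length X + n))"
    by (rule length_trans_out_prefix_mono) simp
  finally have "Suc i \<le> length (trans_out_prefix t out (run_state t s0 X) \<psi> n)"
    by (simp add: trans_out_prefix_conc)
  then show ?thesis by (auto simp: Suc_le_eq)
qed

lemma computes_conc:
  "f (X \<frown> \<psi>) = run_output t out s0 X \<frown> suffix (length (run_output t out s0 X)) (f (X \<frown> \<psi>))"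
proof -
  have "prefix (length (run_output t out s0 X)) (f (X \<frown> \<psi>)) = run_output t out s0 X"
    by (rule nth_equalityI) (simp_all add: computes_conc_prefix)
  then show ?thesis using prefix_suffix by metis
qed

lemma computes_suffix_eq:
  assumes "run_state t s0 X = run_state t s0 Y"
  shows "suffix (length (run_output t out s0 X)) (f (X \<frown> \<psi>)) =
    suffix (length (run_output t out s0 Y)) (f (Y \<frown> \<psi>))"
proof
  fix i
  obtain k where "i < length (trans_out_prefix t out (run_state t s0 X) \<psi> k)"
    using computes_output_unbounded by blast
  then show "suffix (length (run_output t out s0 X)) (f (X \<frown> \<psi>)) i =
      suffix (length (run_output t out s0 Y)) (f (Y \<frown> \<psi>)) i"
    using assms by (simp add: computes_conc_suffix)
qed

lemma computes_pumps_loop: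
  assumes "run_state t s0 (X @ P) = run_state t s0 X"
  shows "pumps f X P (run_output t out s0 X) (run_output t out (run_state t s0 X) P)"
  unfolding pumps_def
proof
  fix \<psi>
  let ?T = "suffix (length (run_output t out s0 X)) (f (X \<frown> \<psi>))"
  have "f ((X @ P) \<frown> \<psi>) = run_output t out s0 (X @ P) \<frown> ?T"
    using computes_conc[of "X @ P" \<psi>] computes_suffix_eq[OF assms, of \<psi>] by simp
  then show "\<exists>T. f (X \<frown> \<psi>) = run_output t out s0 X \<frown> T \<and>
      f ((X @ P) \<frown> \<psi>) = (run_output t out s0 X @ run_output t out (run_state t s0 X) P) \<frown> T"
    using computes_conc[of X \<psi>] by (auto simp: run_output_append)
qed

lemma computes_pumpable: "pumpable (card S) f"
  unfolding pumpable_def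
proof (intro allI)
  fix U v
  have "finite S" and s0: "s0 \<in> S" and closed: "\<forall>s\<in>S. \<forall>b. t s b \<in> S"
    using computes unfolding transducer_computes_def by auto
  define state where "state j = run_state t s0 (U @ list_pow v j)" for j
  have "state ` {..card S} \<subseteq> S"
    using run_state_closed[OF s0 closed] unfolding state_def by blast
  then have "card (state ` {..card S}) < card {..card S}"
    using card_mono[OF \<open>finite S\<close>] by (simp add: le_imp_less_Suc)
  then obtain i i' where "i < i'" "i' \<le> card S" "state i = state i'"
    using pigeonhole unfolding inj_on_def by (metis atMost_iff linorder_neqE_nat)
  define X where "X = U @ list_pow v i"
  have "X @ list_pow v (i' - i) = U @ list_pow v i'"
    using \<open>i < i'\<close> by (simp add: X_def list_pow_add[symmetric])
  then have "run_state t s0 (X @ list_pow v (i' - i)) = run_state t s0 X"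
    using \<open>state i = state i'\<close> by (simp add: state_def X_def)
  then have "pumps f (U @ list_pow v i) (list_pow v (i' - i))
      (run_output t out s0 X) (run_output t out (run_state t s0 X) (list_pow v (i' - i)))"
    unfolding X_def by (rule computes_pumps_loop)
  moreover have "smooth (card S) (i' - i)"
    using \<open>i < i'\<close> \<open>i' \<le> card S\<close> by (simp add: smooth_if_le)
  ultimately show "\<exists>m a Y Q. smooth (card S) a \<and> pumps f (U @ list_pow v m) (list_pow v a) Y Q"
    by blast
qed

end

lemma rational_homeo_pumpable: "f \<in> rational_homeos \<Longrightarrow> \<exists>N. pumpable N f"
  unfolding rational_homeos_def using computes_pumpable by blast

theorem theorem3p1:
  assumes "is_submonoid_of_R M"
    and "infinite {p :: nat. prime p \<and> switch_every p \<in> M}"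
  shows "\<not> finitely_generated_monoid M"
proof
  assume "finitely_generated_monoid M"
  then obtain G where "finite G" "G \<subseteq> M" "monoid_generated G = M"
    unfolding finitely_generated_monoid_def by blast
  moreover have "M \<subseteq> rational_homeos"
    using assms(1) unfolding is_submonoid_of_R_def by blast
  ultimately obtain N where N: "\<forall>h \<in> M. pumpable N h"
    using rational_homeo_pumpable monoid_generated_pumpable by (metis subsetD)
  obtain p where "N < p" "prime p" "switch_every p \<in> M"
    using assms(2) unfolding infinite_nat_iff_unbounded by blast
  then show False
    using N not_pumpable_switch_every by blast
qed

end
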